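(* Let $a,b\in\mathbb{R}$ satisfy $\frac13<a-b<\frac4{\pi^2}$ and $\frac2\pi-b<a\le\frac12$. Suppose moreover that $16ab(b-a)+(a+b)^2>0$ and that \[ x_1=\frac{(a+b)(2b-2a+1)-\sqrt{16ab(b-a)+(a+b)^2}}{2(a-b)^2}>0 . \] Then for all $x\in(0,1)$, \[ L(x)\le \arccos x\le \frac{(1+x_1)^{b+1/2}(1-x_1)^{1/2-a}}{a+b+(a-b)x_1}\cdot\frac{(1-x)^a}{(1+x)^b}, \] where $L(x)=\min\{2^{b+1/2},\frac{\pi}{2}\}\dfrac{(1-x)^a}{(1+x)^b}$ if $a=\frac12$, and $L(x)=0$ if $a<\frac12$.
   Context: $\arccos$ denotes the principal inverse cosine with values in $[0,\pi]$. *)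

theory Defs
  imports "HOL-Analysis.Analysis"
begin

end

theory Submission
  imports Defs
begin

(*
  Write  arccos x = exp (G x) * (1-x)^a / (1+x)^b  with
  G x = ln (arccos x) + b ln (1+x) - a ln (1-x).  Then
  G' = P / ((1-x^2) arccos x)  where  P x = D x arccos x - sqrt (1-x^2),  D x = a+b+(a-b)x.
  At a zero of P we have arccos x = sqrt (1-x^2) / D x, so there G agrees with
  H x = (b+1/2) ln (1+x) + (1/2-a) ln (1-x) - ln (D x),  whose derivative has the sign of a
  quadratic N with roots x1 < 1 <= x2; hence H is maximal at x1 and K = exp (H x1).

  Upper bound: P 0 > 0 and P < 0 near 1 (a Taylor estimate), so on [0,c] the maximum of G is
  attained at an interior critical point y, where G y = H y <= H x1.
  Lower bound (a = 1/2): at a zero u of P the derivative P' u has the sign of -N u, so P crosses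
  zero only downwards before x1 and only upwards after x1, while P < 0 near 1.  Hence either
  P >= 0 on [0,x] (G increasing, G x >= G 0 = ln (pi/2)), or P <= 0 on [x,1) (G decreasing,
  G x >= lim G = (b+1/2) ln 2 by arccos y >= sqrt (2(1-y))).
*)

lemma cos_ge_taylor2:
  fixes t :: real assumes "0 \<le> t" shows "1 - t^2/2 \<le> cos t"
proof -
  let ?f = "\<lambda>x::real. cos x - 1 + x^2/2"
  have "?f 0 \<le> ?f t"
    by (rule DERIV_nonneg_imp_nondecreasing[OF assms])
       (auto intro!: exI derivative_eq_intros simp: sin_x_le_x)
  then show ?thesis by simp
qed

lemma sin_ge_taylor3:
  fixes t :: real assumes "0 \<le> t" shows "t - t^3/6 \<le> sin t"
proof -
  let ?f = "\<lambda>x::real. sin x - x + x^3/6"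
  have "?f 0 \<le> ?f t"
  proof (rule DERIV_nonneg_imp_nondecreasing[OF assms])
    fix x :: real assume "0 \<le> x" "x \<le> t"
    have "(?f has_real_derivative (cos x - 1 + x^2/2)) (at x)"
      by (auto intro!: derivative_eq_intros)
    then show "\<exists>y. (?f has_real_derivative y) (at x) \<and> 0 \<le> y"
      using cos_ge_taylor2[OF \<open>0 \<le> x\<close>] by auto
  qed
  then show ?thesis by simp
qed

lemma cos_le_taylor4:
  fixes t :: real assumes "0 \<le> t" shows "cos t \<le> 1 - t^2/2 + t^4/24"
proof -
  let ?f = "\<lambda>x::real. 1 - x^2/2 + x^4/24 - cos x"
  have "?f 0 \<le> ?f t"
  proof (rule DERIV_nonneg_imp_nondecreasing[OF assms])
    fix x :: real assume "0 \<le> x" "x \<le> t"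
    have "(?f has_real_derivative (sin x - x + x^3/6)) (at x)"
      by (auto intro!: derivative_eq_intros)
    then show "\<exists>y. (?f has_real_derivative y) (at x) \<and> 0 \<le> y"
      using sin_ge_taylor3[OF \<open>0 \<le> x\<close>] by auto
  qed
  then show ?thesis by simp
qed

text \<open>For small t > 0 the weighted cosine  (s + d cos t) t  stays below  sin t; with t = arccos y
  this says that  P y < 0  for y close to 1.\<close>

lemma affine_cos_times_lt_sin:
  fixes s d t :: real
  assumes d: "1/3 < d" and sd: "s + d \<le> 1" and t: "0 < t" and dt: "d*t^2 < 6*d - 2"
  shows "(s + d*cos t)*t < sin t"
proof -
  define C where "C = 1 - t^2/2 + t^4/24"
  have "cos t \<le> C" unfolding C_def using cos_le_taylor4 t by simp
  then have "(s + d*cos t)*t \<le> (s + d*C)*t"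
    using d t by (intro mult_right_mono add_left_mono mult_left_mono) auto
  also have "\<dots> \<le> (1 - d + d*C)*t"
    using sd t by (intro mult_right_mono) auto
  also have "\<dots> = t - t^3/6 - t^3*(d/2 - 1/6 - d*t^2/24)"
    unfolding C_def by (simp add: algebra_simps power2_eq_square power3_eq_cube power4_eq_xxxx)
  also have "\<dots> < t - t^3/6"
  proof -
    have "0 < d/2 - 1/6 - d*t^2/24" using d dt by linarith
    then show ?thesis using t by simp
  qed
  also have "\<dots> \<le> sin t"
    using sin_ge_taylor3 t by simp
  finally show ?thesis .
qed

text \<open>An elementary lower bound for arccos, from  1 - y = 2 sin^2 (t/2)  and  sin u <= u.\<close>

lemma arccos_ge_sqrt:
  assumes "-1 \<le> y" "y \<le> 1" shows "sqrt (2*(1 - y)) \<le> arccos y"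
proof -
  define t where "t = arccos y"
  have t: "0 \<le> t" "t \<le> pi" unfolding t_def using arccos_bounded assms by auto
  have "1 - y = 2 * sin (t/2)^2"
    using cos_double_sin[of "t/2"] assms unfolding t_def by simp
  then have "2*(1 - y) = (2 * sin (t/2))^2" by (simp add: power2_eq_square)
  then have "sqrt (2*(1 - y)) = \<bar>2 * sin (t/2)\<bar>" by (metis real_sqrt_abs)
  also have "\<dots> = 2 * sin (t/2)" using sin_ge_zero[of "t/2"] t by simp
  also have "\<dots> \<le> t" using sin_x_le_x[of "t/2"] t by simp
  finally show ?thesis unfolding t_def .
qed

text \<open>A continuous function whose zeros in [p,r) are all strict down-crossings (negative
  derivative) cannot pass from a nonpositive value at p to a positive value at r: after the last
  zero it would have to be positive, yet just to the right of a zero it is negative.\<close>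

lemma nonpos_if_zeros_decreasing:
  fixes f f' :: "real \<Rightarrow> real"
  assumes pr: "p \<le> r" and cont: "continuous_on {p..r} f"
    and zeros: "\<And>u. p \<le> u \<Longrightarrow> u < r \<Longrightarrow> f u = 0 \<Longrightarrow> (f has_real_derivative f' u) (at u) \<and> f' u < 0"
    and fp: "f p \<le> 0"
  shows "f r \<le> 0"
proof (rule ccontr)
  assume "\<not> f r \<le> 0"
  then have fr: "f r > 0" by simp
  define S where "S = {x \<in> {p..r}. f x = 0}"
  obtain z where "p \<le> z" "z \<le> r" "f z = 0" using IVT'[of f p 0 r] fp fr pr cont by auto
  then have Sne: "S \<noteq> {}" unfolding S_def by auto
  have Sb: "bdd_above S" unfolding S_def by (rule bdd_aboveI[of _ r]) auto
  have Sc: "closed S" unfolding S_def by (rule continuous_closed_preimage_constant[OF cont]) simp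
  define u where "u = Sup S"
  have "u \<in> S" using closed_contains_Sup[OF Sne Sb Sc] u_def by simp
  then have up: "p \<le> u" and ur: "u < r" and fu: "f u = 0"
    using fr unfolding S_def by (auto simp: less_le)
  obtain d where d: "d > 0" "\<forall>h>0. h < d \<longrightarrow> f (u + h) < f u"
    using zeros[OF up ur fu] DERIV_neg_dec_right by blast
  define h where "h = min (d/2) ((r - u)/2)"
  have "h \<le> d/2" unfolding h_def by (rule min.cobounded1)
  moreover have "h \<le> (r - u)/2" unfolding h_def by (rule min.cobounded2)
  moreover have "0 < h" using d ur unfolding h_def by simp
  ultimately have h: "0 < h" "h < d" "u + h < r" using \<open>d > 0\<close> ur by argo+
  have "f (u + h) < 0" using d h fu by auto
  moreover have "continuous_on {u + h..r} f" using cont by (rule continuous_on_subset) (use up h in auto)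
  ultimately obtain w where w: "u + h \<le> w" "w \<le> r" "f w = 0" using IVT'[of f "u + h" 0 r] fr h by auto
  then have "w \<in> S" using up h unfolding S_def by auto
  then have "w \<le> u" unfolding u_def by (rule cSup_upper[OF _ Sb])
  then show False using w h by auto
qed

lemma interior_max_is_critical:
  fixes f f' :: "real \<Rightarrow> real"
  assumes pq: "p < q"
    and deriv: "\<And>t. p \<le> t \<Longrightarrow> t \<le> q \<Longrightarrow> (f has_real_derivative f' t) (at t)"
    and left: "0 < f' p" and right: "f' q < 0"
  obtains y where "p < y" "y < q" "f' y = 0" "\<And>z. p \<le> z \<Longrightarrow> z \<le> q \<Longrightarrow> f z \<le> f y"
proof -
  have "continuous_on {p..q} f"
    using deriv by (intro continuous_at_imp_continuous_on ballI DERIV_isCont) auto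
  then obtain y where y: "y \<in> {p..q}" and "\<forall>z\<in>{p..q}. f z \<le> f y"
    using continuous_attains_sup[of "{p..q}" f] pq by auto
  then have max: "\<And>z. z \<in> {p..q} \<Longrightarrow> f z \<le> f y" by blast
  have "y \<noteq> p"
  proof
    assume "y = p"
    obtain d where d: "d > 0" "\<forall>h>0. h < d \<longrightarrow> f p < f (p + h)"
      using DERIV_pos_inc_right[OF deriv left] pq by auto
    define h where "h = min (d/2) (q - p)"
    have "0 < h" "h < d" "p + h \<in> {p..q}" using d pq unfolding h_def by auto
    then show False using d max[of "p + h"] \<open>y = p\<close> by fastforce
  qed
  moreover have "y \<noteq> q"
  proof
    assume "y = q"
    obtain d where d: "d > 0" "\<forall>h>0. h < d \<longrightarrow> f q < f (q - h)"
      using DERIV_neg_dec_left[OF deriv right] pq by auto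
    define h where "h = min (d/2) (q - p)"
    have "0 < h" "h < d" "q - h \<in> {p..q}" using d pq unfolding h_def by auto
    then show False using d max[of "q - h"] \<open>y = q\<close> by fastforce
  qed
  ultimately have inner: "p < y" "y < q" using y by auto
  have "f' y = 0"
  proof (rule DERIV_local_max[OF deriv])
    show "0 < min (y - p) (q - y)" using inner by simp
    show "\<forall>z. \<bar>y - z\<bar> < min (y - p) (q - y) \<longrightarrow> f z \<le> f y"
      by (auto intro!: max simp: abs_if split: if_splits)
  qed (use inner in auto)
  then show ?thesis using that inner max by auto
qed

lemma quadratic_factorization:
  fixes k S r x :: real
  assumes "k \<noteq> 0"
  shows "k * (x - (S - r)/(2*k)) * (x - (S + r)/(2*k)) = k*x^2 - S*x + (S^2 - r^2)/(4*k)"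
  using assms by (simp add: field_simps power2_eq_square)

text \<open>The derivative of G over a common denominator (q stands for sqrt (1 - x^2), A for arccos x).\<close>

lemma G_deriv_identity:
  fixes A q x a b :: real
  assumes A: "0 < A" and q: "0 < q" "q^2 = (1 + x)*(1 - x)" and x: "0 < 1 + x" "0 < 1 - x"
  shows "inverse (- q) / A + b/(1 + x) + a/(1 - x) = ((a + b + (a - b)*x) * A - q) / ((1 + x)*(1 - x) * A)"
proof -
  have "inverse (- q) / A = - q / ((1 + x)*(1 - x) * A)"
    using A q by (simp add: divide_simps flip: q(2)) (simp add: power2_eq_square)
  moreover have "b/(1 + x) = b*(1 - x)*A / ((1 + x)*(1 - x) * A)"
    and "a/(1 - x) = a*(1 + x)*A / ((1 + x)*(1 - x) * A)" using A x by simp_all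
  ultimately show ?thesis by (simp add: add_divide_distrib[symmetric] algebra_simps)
qed

lemma H_deriv_identity:
  fixes x a b D :: real
  assumes D: "0 < D" "D = a + b + (a - b)*x" and x: "0 < 1 + x" "0 < 1 - x"
  shows "(b + 1/2)/(1 + x) - (1/2 - a)/(1 - x) - (a - b)/D =
    ((a - b)^2*x^2 - (a + b)*(2*b - 2*a + 1)*x + (a + b)^2 - (a - b)) / ((1 + x)*(1 - x) * D)"
proof -
  let ?d = "(1 + x)*(1 - x) * D"
  have "(b + 1/2)/(1 + x) = (b + 1/2)*(1 - x)*D / ?d"
    and "(1/2 - a)/(1 - x) = (1/2 - a)*(1 + x)*D / ?d"
    and "(a - b)/D = (a - b)*(1 + x)*(1 - x) / ?d" using D x by simp_all
  then have "(b + 1/2)/(1 + x) - (1/2 - a)/(1 - x) - (a - b)/D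
      = ((b + 1/2)*(1 - x)*D - (1/2 - a)*(1 + x)*D - (a - b)*(1 + x)*(1 - x)) / ?d"
    by (simp only: diff_divide_distrib)
  also have "(b + 1/2)*(1 - x)*D - (1/2 - a)*(1 + x)*D - (a - b)*(1 + x)*(1 - x)
      = (a - b)^2*x^2 - (a + b)*(2*b - 2*a + 1)*x + (a + b)^2 - (a - b)"
    unfolding D(2) by algebra
  finally show ?thesis .
qed

text \<open>The parameters of the theorem, with the hypotheses actually used.\<close>

locale arccos_power_bound =
  fixes a b x1 :: real
  assumes diff_gt: "1/3 < a - b" and sum_gt: "2/pi < a + b" and a_le: "a \<le> 1/2"
    and disc_pos: "0 < 16*a*b*(b - a) + (a + b)^2"
    and x1_def: "x1 = ((a + b)*(2*b - 2*a + 1) - sqrt (16*a*b*(b - a) + (a + b)^2)) / (2*(a - b)^2)"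
    and x1_pos: "0 < x1"
begin

definition r :: real where "r = sqrt (16*a*b*(b - a) + (a + b)^2)"

definition x2 :: real where "x2 = ((a + b)*(2*b - 2*a + 1) + r) / (2*(a - b)^2)"

text \<open>The numerator of H', whose roots are x1 and x2.\<close>
definition N :: "real \<Rightarrow> real"
  where "N x = (a - b)^2*x^2 - (a + b)*(2*b - 2*a + 1)*x + (a + b)^2 - (a - b)"

definition D :: "real \<Rightarrow> real" where "D x = a + b + (a - b)*x"

text \<open>The numerator of G'; its derivative is dP.\<close>
definition P :: "real \<Rightarrow> real" where "P x = D x * arccos x - sqrt (1 - x^2)"

definition dP :: "real \<Rightarrow> real"
  where "dP x = (a - b)*arccos x - D x / sqrt (1 - x^2) + x / sqrt (1 - x^2)"

text \<open>G is the logarithm of  arccos x * (1+x)^b / (1-x)^a;  H is its value at zeros of P.\<close>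
definition G :: "real \<Rightarrow> real" where "G x = ln (arccos x) + b*ln (1 + x) - a*ln (1 - x)"

definition H :: "real \<Rightarrow> real"
  where "H x = (b + 1/2)*ln (1 + x) + (1/2 - a)*ln (1 - x) - ln (D x)"

lemma a_pos: "0 < a" and b_pos: "0 < b"
proof -
  have "1/2 < 2/pi" using pi_less_4 by (simp add: field_simps)
  then show "0 < b" using sum_gt a_le by linarith
  then show "0 < a" using diff_gt by linarith
qed

lemma r_pos: "0 < r" and r_sq: "r^2 = 16*a*b*(b - a) + (a + b)^2"
  using disc_pos unfolding r_def by auto

lemma N_factor: "N x = (a - b)^2 * (x - x1) * (x - x2)"
proof -
  define S where "S = (a + b)*(2*b - 2*a + 1)"
  have k: "(a - b)^2 \<noteq> 0" using diff_gt by simp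
  have disc: "S^2 - r^2 = 4*(a - b)^2*((a + b)^2 - (a - b))"
    unfolding S_def r_sq by algebra
  have "x1 = (S - r)/(2*(a - b)^2)" "x2 = (S + r)/(2*(a - b)^2)"
    unfolding x1_def x2_def S_def r_def by simp_all
  then have "N x = (a - b)^2*x^2 - S*x + (S^2 - r^2)/(4*(a - b)^2)"
    unfolding disc unfolding N_def S_def using k by simp
  then show ?thesis
    unfolding quadratic_factorization[OF k] \<open>x1 = _\<close> \<open>x2 = _\<close> .
qed

text \<open>x1 < 1: this is where  a <= 1/2  enters (with equality handled separately).\<close>

lemma x1_lt_1: "x1 < 1"
proof -
  define S where "S = (a + b)*(2*b - 2*a + 1)"
  have k: "0 < 2*(a - b)^2" using diff_gt by simp
  have gap: "r^2 - (S - 2*(a - b)^2)^2 = 8*(a - b)^2*a*(1 - 2*a)"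
    unfolding S_def r_sq by algebra
  have "S - 2*(a - b)^2 < r"
  proof (cases "a = 1/2")
    case True
    then have "S - 2*(a - b)^2 = 3*b - 1/2"
      unfolding S_def by (simp add: power2_eq_square field_simps)
    then show ?thesis using True diff_gt r_pos by linarith
  next
    case False
    then have "0 < 8*(a - b)^2*a*(1 - 2*a)" using a_le a_pos diff_gt by simp
    then have "(S - 2*(a - b)^2)^2 < r^2" using gap by linarith
    then show ?thesis using r_pos by (auto intro: power2_less_imp_less)
  qed
  then have "S - r < 2*(a - b)^2" by linarith
  then show ?thesis unfolding x1_def r_def[symmetric] S_def[symmetric] using k by simp
qed

lemma x2_ge_1: "1 \<le> x2"
proof (rule ccontr)
  assume "\<not> 1 \<le> x2"
  then have "0 < N 1" unfolding N_factor using x1_lt_1 diff_gt by simp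
  moreover have "N 1 = 2*a*(2*a - 1)" unfolding N_def by (simp add: power2_eq_square algebra_simps)
  moreover have "2*a*(2*a - 1) \<le> 0" using a_pos a_le by (simp add: mult_nonneg_nonpos)
  ultimately show False by simp
qed

lemma N_pos:
  assumes "x < x1" shows "0 < N x"
proof -
  have "0 < (x - x1) * (x - x2)" using assms x1_lt_1 x2_ge_1 by (intro mult_neg_neg) auto
  then show ?thesis unfolding N_factor using diff_gt by (simp add: mult.assoc)
qed

lemma N_neg:
  assumes "x1 < x" "x < 1" shows "N x < 0"
proof -
  have "(x - x1) * (x - x2) < 0" using assms x2_ge_1 by (intro mult_pos_neg) auto
  then show ?thesis unfolding N_factor using diff_gt by (simp add: mult.assoc mult_pos_neg)
qed

lemma positivity:
  assumes "0 \<le> x" "x < 1"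
  shows "0 < D x" "0 < arccos x" "0 < 1 - x^2" "0 < sqrt (1 - x^2)" "0 < (1 + x)*(1 - x)"
proof -
  have "0 \<le> (a - b)*x" using assms diff_gt by simp
  moreover have "0 < 2/pi" by simp
  ultimately show "0 < D x" unfolding D_def using sum_gt by linarith
  show "0 < arccos x" using assms arccos_lt_bounded by auto
  show "0 < 1 - x^2" using assms by (simp add: abs_square_less_1)
  then show "0 < sqrt (1 - x^2)" by simp
  show "0 < (1 + x)*(1 - x)" using assms by simp
qed

lemma G_deriv:
  assumes "0 \<le> x" "x < 1"
  shows "(G has_real_derivative P x / ((1 + x)*(1 - x) * arccos x)) (at x)"
proof -
  note pos = positivity[OF assms]
  have "(G has_real_derivative inverse (- sqrt (1 - x^2)) / arccos x + b/(1 + x) + a/(1 - x)) (at x)"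
    unfolding G_def[abs_def] using assms by (auto intro!: derivative_eq_intros simp: arccos_lt_bounded)
  moreover have "(sqrt (1 - x^2))^2 = (1 + x)*(1 - x)" using pos by (simp add: algebra_simps power2_eq_square)
  ultimately show ?thesis
    using G_deriv_identity[of "arccos x" "sqrt (1 - x^2)" x] pos assms unfolding P_def D_def by simp
qed

lemma P_deriv:
  assumes "0 \<le> x" "x < 1" shows "(P has_real_derivative dP x) (at x)"
  using assms positivity(3)[OF assms] unfolding P_def[abs_def] D_def dP_def
  by (auto intro!: derivative_eq_intros) (simp add: divide_inverse mult.commute)

lemma H_deriv:
  assumes "0 \<le> x" "x < 1"
  shows "(H has_real_derivative N x / ((1 + x)*(1 - x) * D x)) (at x)"
proof -
  have "0 < D x" using positivity assms by simp
  then have "(H has_real_derivative (b + 1/2)/(1 + x) - (1/2 - a)/(1 - x) - (a - b)/D x) (at x)"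
    unfolding H_def[abs_def] D_def using assms by (auto intro!: derivative_eq_intros)
  then show ?thesis
    using H_deriv_identity[of "D x" a b x] \<open>0 < D x\<close> assms unfolding N_def D_def by simp
qed

lemma P_continuous: "0 \<le> p \<Longrightarrow> q < 1 \<Longrightarrow> continuous_on {p..q} P"
  by (intro continuous_at_imp_continuous_on ballI DERIV_isCont[OF P_deriv]) auto

text \<open>At a zero of P the derivative of P has the sign of -N; so zeros of P before x1 are
  down-crossings and zeros after x1 are up-crossings.\<close>

lemma dP_at_zero:
  assumes "0 \<le> u" "u < 1" "P u = 0"
  shows "dP u * (D u * sqrt (1 - u^2)) = - N u"
proof -
  note pos = positivity[OF assms(1,2)]
  have "D u * arccos u = sqrt (1 - u^2)" using assms(3) unfolding P_def by simp
  then have "dP u * (D u * sqrt (1 - u^2)) = (a - b)*(1 - u^2) - D u^2 + u * D u"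
    using pos unfolding dP_def by (simp add: field_simps power2_eq_square)
  also have "\<dots> = - N u" unfolding D_def N_def by algebra
  finally show ?thesis .
qed

lemma dP_neg_before_x1:
  assumes "0 \<le> u" "u < x1" "P u = 0" shows "dP u < 0"
proof -
  have u1: "u < 1" using assms x1_lt_1 by simp
  have "dP u * (D u * sqrt (1 - u^2)) < 0"
    using dP_at_zero[OF assms(1) u1 assms(3)] N_pos[OF assms(2)] by simp
  moreover have "0 < D u * sqrt (1 - u^2)" using positivity[OF assms(1) u1] by simp
  ultimately show ?thesis by (metis mult_less_0_iff less_asym)
qed

lemma dP_pos_after_x1:
  assumes "x1 < u" "u < 1" "P u = 0" shows "0 < dP u"
proof -
  have u0: "0 \<le> u" using assms x1_pos by simp
  have "0 < dP u * (D u * sqrt (1 - u^2))"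
    using dP_at_zero[OF u0 assms(2,3)] N_neg[OF assms(1,2)] by simp
  moreover have "0 < D u * sqrt (1 - u^2)" using positivity[OF u0 assms(2)] by simp
  ultimately show ?thesis by (simp add: zero_less_mult_iff)
qed

lemma P_0_pos: "0 < P 0"
  using sum_gt pi_gt_zero unfolding P_def D_def by (simp add: field_simps)

lemma P_neg_near_1: "\<exists>c<1. \<forall>y. c < y \<longrightarrow> y < 1 \<longrightarrow> P y < 0"
proof -
  define t0 where "t0 = min 1 (sqrt ((6*(a - b) - 2)/(a - b)))"
  have q: "0 < (6*(a - b) - 2)/(a - b)" using diff_gt by (simp add: divide_pos_pos)
  have t0: "0 < t0" "t0 \<le> pi" unfolding t0_def using q pi_gt3 by auto
  have "P y < 0" if y: "cos t0 < y" "y < 1" for y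
  proof -
    have ym: "-1 < y" using y cos_ge_minus_one[of t0] by linarith
    define t where "t = arccos y"
    have tpos: "0 < t" unfolding t_def using arccos_lt_bounded ym y by auto
    have "t < arccos (cos t0)" unfolding t_def using arccos_less_arccos[of "cos t0" y] y by simp
    then have "t < sqrt ((6*(a - b) - 2)/(a - b))" using arccos_cos[of t0] t0 t0_def by simp
    then have "t^2 < (sqrt ((6*(a - b) - 2)/(a - b)))^2" using tpos by (intro power_strict_mono) auto
    then have "t^2 < (6*(a - b) - 2)/(a - b)" using q by simp
    then have "(a - b)*t^2 < 6*(a - b) - 2" using diff_gt by (simp add: pos_less_divide_eq mult.commute)
    then have "((a + b) + (a - b)*cos t)*t < sin t"
      using affine_cos_times_lt_sin diff_gt a_le tpos by simp
    moreover have "cos t = y" "sin t = sqrt (1 - y^2)" unfolding t_def using ym y sin_arccos by auto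
    ultimately show ?thesis unfolding P_def D_def t_def by (simp add: mult.commute)
  qed
  moreover have "cos t0 < 1" using cos_monotone_0_pi[of 0 t0] t0 by simp
  ultimately show ?thesis by blast
qed

lemma G_eq_H_at_zero:
  assumes "0 \<le> y" "y < 1" "P y = 0" shows "G y = H y"
proof -
  note pos = positivity[OF assms(1,2)]
  have "arccos y = sqrt ((1 + y)*(1 - y)) / D y"
    using assms(3) pos unfolding P_def by (simp add: field_simps power2_eq_square)
  then have "ln (arccos y) = (ln (1 + y) + ln (1 - y))/2 - ln (D y)"
    using pos assms by (simp add: ln_div ln_sqrt ln_mult)
  then show ?thesis unfolding G_def H_def by (simp add: algebra_simps)
qed

lemma H_le_H_x1:
  assumes "0 \<le> y" "y < 1" shows "H y \<le> H x1"
proof (cases "y \<le> x1")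
  case True
  show ?thesis
  proof (rule DERIV_nonneg_imp_nondecreasing[OF True])
    fix t assume t: "y \<le> t" "t \<le> x1"
    then have t01: "0 \<le> t" "t < 1" using assms x1_lt_1 by auto
    have "0 \<le> N t" using N_pos[of t] N_factor[of t] t by (cases "t < x1") auto
    then show "\<exists>z. (H has_real_derivative z) (at t) \<and> 0 \<le> z"
      using H_deriv[OF t01] positivity[OF t01] by force
  qed
next
  case False
  show ?thesis
  proof (rule DERIV_nonpos_imp_nonincreasing[of x1 y])
    show "x1 \<le> y" using False by simp
    fix t assume t: "x1 \<le> t" "t \<le> y"
    then have t01: "0 \<le> t" "t < 1" using assms x1_pos by auto
    have "N t \<le> 0" using N_neg[of t] N_factor[of t] t t01 by (cases "x1 < t") auto
    then show "\<exists>z. (H has_real_derivative z) (at t) \<and> z \<le> 0"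
      using H_deriv[OF t01] positivity[OF t01] by (force simp: divide_nonpos_pos)
  qed
qed

lemma G_le_H_x1:
  assumes x: "0 < x" "x < 1" shows "G x \<le> H x1"
proof -
  obtain c0 where c0: "c0 < 1" "\<And>y. c0 < y \<Longrightarrow> y < 1 \<Longrightarrow> P y < 0" using P_neg_near_1 by blast
  define c where "c = (max x c0 + 1)/2"
  have c: "x < c" "c < 1" "c0 < c" using x c0 unfolding c_def by auto
  let ?G' = "\<lambda>t. P t / ((1 + t)*(1 - t) * arccos t)"
  have "0 < ?G' 0" using P_0_pos by simp
  moreover have "?G' c < 0" using c0 c positivity[of c] x by (simp add: divide_neg_pos)
  moreover have "\<And>t. 0 \<le> t \<Longrightarrow> t \<le> c \<Longrightarrow> (G has_real_derivative ?G' t) (at t)"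
    using G_deriv c by simp
  ultimately obtain y where y: "0 < y" "y < c" "?G' y = 0" and max: "\<And>z. 0 \<le> z \<Longrightarrow> z \<le> c \<Longrightarrow> G z \<le> G y"
    using interior_max_is_critical[of 0 c G ?G'] c x by auto
  have y01: "0 \<le> y" "y < 1" using y c by auto
  then have "P y = 0" using y(3) positivity[OF y01] by simp
  then have "G y \<le> H x1" using G_eq_H_at_zero H_le_H_x1 y01 by simp
  moreover have "G x \<le> G y" using max x c by simp
  ultimately show ?thesis by linarith
qed

lemma P_nonpos_from_x1:
  assumes z: "x1 \<le> z" "z < 1" shows "P z \<le> 0"
proof (rule ccontr)
  assume "\<not> P z \<le> 0"
  then have Pz: "0 < P z" by simp
  obtain c0 where c0: "c0 < 1" "\<And>y. c0 < y \<Longrightarrow> y < 1 \<Longrightarrow> P y < 0" using P_neg_near_1 by blast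
  define w where "w = (max z c0 + 1)/2"
  have w: "z < w" "w < 1" "c0 < w" using z c0 unfolding w_def by auto
  have "- P w \<le> 0"
  proof (rule nonpos_if_zeros_decreasing[of z w "\<lambda>t. - P t" "\<lambda>t. - dP t"])
    show "continuous_on {z..w} (\<lambda>t. - P t)"
      using P_continuous[of z w] z x1_pos w by (intro continuous_on_minus) auto
    fix u assume u: "z \<le> u" "u < w" "- P u = 0"
    then have u1: "x1 < u" "u < 1" using Pz z w by (auto simp: order.order_iff_strict)
    show "((\<lambda>t. - P t) has_real_derivative - dP u) (at u) \<and> - dP u < 0"
      using P_deriv[of u] dP_pos_after_x1[OF u1] u u1 x1_pos by (auto intro: DERIV_minus)
  qed (use w Pz in auto)
  then show False using c0 w by force
qed

lemma P_stays_nonpos: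
  assumes v: "0 \<le> v" "v \<le> x" "x < 1" "P v < 0" shows "P x \<le> 0"
proof (cases "x1 \<le> x")
  case True
  then show ?thesis using P_nonpos_from_x1 v by simp
next
  case False
  show ?thesis
  proof (rule nonpos_if_zeros_decreasing[of v x P dP])
    show "continuous_on {v..x} P" using P_continuous v by simp
    fix u assume u: "v \<le> u" "u < x" "P u = 0"
    then show "(P has_real_derivative dP u) (at u) \<and> dP u < 0"
      using P_deriv[of u] dP_neg_before_x1[of u] False v by auto
  qed (use v in auto)
qed

lemma G_mono:
  assumes "0 \<le> p" "p \<le> q" "q < 1" "\<And>t. p \<le> t \<Longrightarrow> t \<le> q \<Longrightarrow> 0 \<le> P t"
  shows "G p \<le> G q"
proof (rule DERIV_nonneg_imp_nondecreasing[OF assms(2)])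
  fix t assume t: "p \<le> t" "t \<le> q"
  then have t01: "0 \<le> t" "t < 1" using assms by auto
  show "\<exists>z. (G has_real_derivative z) (at t) \<and> 0 \<le> z"
    using G_deriv[OF t01] positivity[OF t01] assms(4)[OF t] by force
qed

lemma G_antimono:
  assumes "0 \<le> p" "p \<le> q" "q < 1" "\<And>t. p \<le> t \<Longrightarrow> t \<le> q \<Longrightarrow> P t \<le> 0"
  shows "G q \<le> G p"
proof (rule DERIV_nonpos_imp_nonincreasing[OF assms(2)])
  fix t assume t: "p \<le> t" "t \<le> q"
  then have t01: "0 \<le> t" "t < 1" using assms by auto
  show "\<exists>z. (G has_real_derivative z) (at t) \<and> z \<le> 0"
    using G_deriv[OF t01] positivity[OF t01] assms(4)[OF t] by (force simp: divide_nonpos_pos)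
qed

lemma G_ge_near_1:
  assumes a: "a = 1/2" and y: "0 \<le> y" "y < 1" shows "ln 2 / 2 + b*ln (1 + y) \<le> G y"
proof -
  have "ln (sqrt (2*(1 - y))) \<le> ln (arccos y)"
    using arccos_ge_sqrt[of y] y positivity[OF y] by simp
  moreover have "ln (2*(1 - y)) = ln 2 + ln (1 - y)" using y by (intro ln_mult_pos) auto
  then have "ln (sqrt (2*(1 - y))) = (ln 2 + ln (1 - y))/2" using y by (simp add: ln_sqrt)
  moreover have "a*ln (1 - y) = ln (1 - y)/2" using a by simp
  ultimately show ?thesis unfolding G_def by argo
qed

lemma exp_G_ge:
  assumes a: "a = 1/2" and x: "0 < x" "x < 1"
  shows "min (2 powr (b + 1/2)) (pi/2) \<le> exp (G x)"
proof (cases "\<forall>t\<in>{0..x}. 0 \<le> P t")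
  case True
  then have "G 0 \<le> G x" using G_mono[of 0 x] x by simp
  moreover have "G 0 = ln (pi/2)" unfolding G_def by simp
  ultimately have "exp (ln (pi/2)) \<le> exp (G x)" by (simp only: exp_le_cancel_iff)
  then have "pi/2 \<le> exp (G x)" by simp
  then show ?thesis by (rule min.coboundedI2)
next
  case False
  then obtain v where v: "0 \<le> v" "v \<le> x" "P v < 0" by auto
  have bound: "ln 2 / 2 + b*ln (1 + y) \<le> G x" if y: "x < y" "y < 1" for y
  proof -
    have "G y \<le> G x"
      using G_antimono[of x y] P_stays_nonpos[of v] v x y by simp
    then show ?thesis using G_ge_near_1[OF a, of y] x y by simp
  qed
  have "((\<lambda>y. ln 2 / 2 + b*ln (1 + y)) \<longlongrightarrow> ln 2 / 2 + b*ln (1 + 1)) (at_left (1::real))"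
    by (intro tendsto_intros) simp
  moreover have "eventually (\<lambda>y. ln 2 / 2 + b*ln (1 + y) \<le> G x) (at_left (1::real))"
    using eventually_at_left_real[OF x(2)] by (rule eventually_mono) (use bound in auto)
  ultimately have "ln 2 / 2 + b*ln 2 \<le> G x"
    by (intro tendsto_upperbound[where F = "at_left (1::real)"]) auto
  then have "exp ((b + 1/2)*ln 2) \<le> exp (G x)" by (simp add: algebra_simps)
  then have "2 powr (b + 1/2) \<le> exp (G x)" by (simp add: powr_def)
  then show ?thesis by (rule min.coboundedI1)
qed

lemma arccos_eq_exp_G:
  assumes "0 < x" "x < 1"
  shows "arccos x = exp (G x) * ((1 - x) powr a / (1 + x) powr b)"
  using assms positivity[of x] unfolding G_def
  by (simp add: exp_diff exp_add powr_def field_simps)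

lemma exp_H_x1:
  "exp (H x1) = (1 + x1) powr (b + 1/2) * (1 - x1) powr (1/2 - a) / (a + b + (a - b)*x1)"
  using x1_pos x1_lt_1 positivity[of x1] unfolding H_def D_def
  by (simp add: exp_diff exp_add powr_def)

end

theorem theorem2:
  fixes a b x\<^sub>1 :: real
  assumes "1/3 < a - b" and "a - b < 4 / pi^2"
    and "2/pi - b < a" and "a \<le> 1/2"
    and "16*a*b*(b - a) + (a + b)^2 > 0"
    and "x\<^sub>1 = ((a + b)*(2*b - 2*a + 1) - sqrt (16*a*b*(b - a) + (a + b)^2)) / (2*(a - b)^2)"
    and "x\<^sub>1 > 0"
  shows "\<forall>x. 0 < x \<and> x < 1 \<longrightarrow>
     (if a = 1/2 then min (2 powr (b + 1/2)) (pi/2) * ((1 - x) powr a / (1 + x) powr b) else 0) \<le> arccos x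
   \<and> arccos x \<le> ((1 + x\<^sub>1) powr (b + 1/2) * (1 - x\<^sub>1) powr (1/2 - a)) / (a + b + (a - b)*x\<^sub>1)
                    * ((1 - x) powr a / (1 + x) powr b)"
proof -
  interpret arccos_power_bound a b x\<^sub>1
    using assms by unfold_locales auto
  show ?thesis
  proof (intro allI impI conjI)
    fix x :: real assume "0 < x \<and> x < 1"
    then have x: "0 < x" "x < 1" by auto
    let ?E = "(1 - x) powr a / (1 + x) powr b"
    have E: "0 < ?E" using x by simp
    have rep: "arccos x = exp (G x) * ?E" using arccos_eq_exp_G[OF x] .
    show "(if a = 1/2 then min (2 powr (b + 1/2)) (pi/2) * ?E else 0) \<le> arccos x"
    proof (cases "a = 1/2")
      case True
      show ?thesis unfolding if_P[OF True] rep
        by (rule mult_right_mono) (use exp_G_ge[OF True x] E in auto)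
    next
      case False
      then show ?thesis using positivity(2)[of x] x by simp
    qed
    show "arccos x \<le> ((1 + x\<^sub>1) powr (b + 1/2) * (1 - x\<^sub>1) powr (1/2 - a)) / (a + b + (a - b)*x\<^sub>1) * ?E"
      unfolding rep exp_H_x1[symmetric]
      by (rule mult_right_mono) (use G_le_H_x1[OF x] E in auto)
  qed
qed

end
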